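(* Let $A\in\mathbb{R}^{d\times d}$ with $A\succ0$ and $u,v\in\mathbb{R}^d$. If $2\langle vv^\top,A^{-1}\rangle<1$, then for every $X\succeq0$, \[ \langle X,(A-vv^\top+uu^\top)^{-1}\rangle\le\langle X,A^{-1}\rangle+\frac{\langle X,A^{-1}vv^\top A^{-1}\rangle}{1-2\langle vv^\top,A^{-1}\rangle}-\frac{\langle X,A^{-1}uu^\top A^{-1}\rangle}{1+2\langle uu^\top,A^{-1}\rangle}. \]
   Context: $\langle M,N\rangle=\operatorname{tr}(M^\top N)$ is the Frobenius inner product. *)

theory Defs
  imports "HOL-Analysis.Analysis"
begin

definition frob :: "real^'n^'n \<Rightarrow> real^'n^'n \<Rightarrow> real" where
  "frob M N = trace (transpose M ** N)"

definition outer :: "real^'n \<Rightarrow> real^'n \<Rightarrow> real^'n^'n" where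
  "outer u v = (\<chi> i j. u $ i * v $ j)"

definition pos_def :: "real^'n^'n \<Rightarrow> bool" where
  "pos_def A \<longleftrightarrow> transpose A = A \<and> (\<forall>x. x \<noteq> 0 \<longrightarrow> x \<bullet> (A *v x) > 0)"

definition pos_semidef :: "real^'n^'n \<Rightarrow> bool" where
  "pos_semidef A \<longleftrightarrow> transpose A = A \<and> (\<forall>x. x \<bullet> (A *v x) \<ge> 0)"

end

(* Write B = A^-1, q = B v, p = B u, a = v'Bv, b = u'Bu, c = v'Bu.  Two Sherman--Morrison steps give
     (A - vv' + uu')^-1 = B + qq'/(1 - a) - ww'/s,   w = p + c/(1 - a) q,   s = 1 + b + c^2/(1 - a).
   Pairing with X and writing Q z = z'Xz, the claim becomes
     Q p/(1 + 2b) <= Q w/s + (1/(1 - 2a) - 1/(1 - a)) Q q.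
   Since p = w - c/(1 - a) q, convexity of Q with weights s/(1 + 2b) and 1 - s/(1 + 2b) bounds Q p by
   Q w/s plus a multiple of Q q, and the Cauchy--Schwarz inequality c^2 <= ab for the form of B shows
   that this multiple is small enough. *)

theory Submission
  imports Defs
begin

lemma frob_eq_sum: "frob M N = (\<Sum>i\<in>UNIV. \<Sum>j\<in>UNIV. M$i$j * N$i$j)"
  unfolding frob_def trace_def transpose_def matrix_matrix_mult_def
  by simp (rule sum.swap)

lemma frob_add_right: "frob X (M + N) = frob X M + frob X N"
  by (simp add: frob_eq_sum distrib_left sum.distrib)

lemma frob_diff_right: "frob X (M - N) = frob X M - frob X N"
  by (simp add: frob_eq_sum right_diff_distrib sum_subtractf)

lemma frob_scaleR_right: "frob X (c *\<^sub>R M) = c * frob X M"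
  by (simp add: frob_eq_sum sum_distrib_left mult.left_commute)

lemma frob_outer_left: "frob (outer x y) M = x \<bullet> (M *v y)"
  by (simp add: frob_eq_sum outer_def inner_vec_def matrix_vector_mult_def sum_distrib_left mult_ac)

lemma frob_outer_right: "frob M (outer x y) = x \<bullet> (M *v y)"
  by (simp add: frob_eq_sum outer_def inner_vec_def matrix_vector_mult_def sum_distrib_left mult_ac)

lemma outer_mult_vector: "outer x y *v z = (y \<bullet> z) *\<^sub>R x"
  by (simp add: outer_def inner_vec_def matrix_vector_mult_def vec_eq_iff sum_distrib_left mult_ac)

lemma matrix_vector_mult_uminus:
  fixes A :: "real^'n^'m"
  shows "A *v (- x) = - (A *v x)"
  using matrix_vector_mult_scaleR[of A "- 1" x] by simp

lemma outer_uminus_left: "outer (- x) y = - outer x y"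
  by (simp add: outer_def vec_eq_iff)

lemma transpose_outer: "transpose (outer x y) = outer y x"
  by (simp add: outer_def transpose_def vec_eq_iff)

lemma vector_matrix_mult_symmetric:
  fixes M :: "'a::comm_semiring_1^'n^'n"
  assumes "transpose M = M"
  shows "x v* M = M *v x"
  using transpose_matrix_vector[of M x] assms by simp

lemma transpose_add: "transpose (A + B) = transpose A + transpose B"
  by (simp add: transpose_def vec_eq_iff)

lemma matrix_mul_outer: "M ** outer x y = outer (M *v x) y"
  by (simp add: outer_def matrix_matrix_mult_def matrix_vector_mult_def vec_eq_iff sum_distrib_right)
     (simp add: mult_ac)

lemma outer_matrix_mul: "outer x y ** M = outer x (y v* M)"
  by (simp add: outer_def matrix_matrix_mult_def vector_matrix_mult_def vec_eq_iff sum_distrib_left mult_ac)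

lemma matrix_inv_inverse:
  fixes A :: "'a::field^'n^'n"
  assumes "invertible A"
  shows "A ** matrix_inv A = mat 1" and "matrix_inv A ** A = mat 1"
  using someI_ex[OF assms[unfolded invertible_def]] unfolding matrix_inv_def by auto

lemma matrix_inv_unique:
  fixes A :: "'a::field^'n^'n"
  assumes "A ** B = mat 1"
  shows "matrix_inv A = B"
proof -
  have "invertible A"
    using assms invertible_right_inverse by blast
  then have "matrix_inv A = matrix_inv A ** (A ** B)"
    using assms by simp
  also have "\<dots> = B"
    using matrix_inv_inverse(2)[OF \<open>invertible A\<close>] by (simp add: matrix_mul_assoc)
  finally show ?thesis .
qed

lemma transpose_matrix_inv:
  fixes A :: "'a::field^'n^'n"
  assumes "invertible A"
  shows "transpose (matrix_inv A) = matrix_inv (transpose A)"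
  using matrix_inv_inverse(2)[OF assms]
  by (metis matrix_inv_unique matrix_transpose_mul transpose_mat)

lemma pos_def_invertible:
  assumes "pos_def A"
  shows "invertible A"
proof -
  have "x = 0" if "A *v x = 0" for x
    using assms that unfolding pos_def_def by force
  then have "inj ((*v) A)"
    by (simp add: linear_injective_0)
  then show ?thesis
    using matrix_left_invertible_injective invertible_left_inverse by blast
qed

lemma pos_semidef_matrix_inv:
  assumes "pos_def A"
  shows "pos_semidef (matrix_inv A)"
proof -
  have inv: "invertible A" and sym: "transpose A = A"
    using assms pos_def_invertible pos_def_def by auto
  have "0 \<le> x \<bullet> (matrix_inv A *v x)" for x
  proof -
    let ?z = "matrix_inv A *v x"
    have "x = A *v ?z"
      using matrix_inv_inverse(1)[OF inv] by (simp add: matrix_vector_mul_assoc)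
    then have "x \<bullet> ?z = ?z \<bullet> (A *v ?z)"
      by (metis inner_commute)
    then show ?thesis
      using assms unfolding pos_def_def by (cases "?z = 0") (auto intro: less_imp_le)
  qed
  then show ?thesis
    unfolding pos_semidef_def using transpose_matrix_inv[OF inv] sym by simp
qed

lemma matrix_inv_add_outer:
  fixes A :: "real^'n^'n"
  assumes "invertible A" and "1 + y \<bullet> (matrix_inv A *v x) \<noteq> 0"
  shows "invertible (A + outer x y)"
    and "matrix_inv (A + outer x y) = matrix_inv A
           - (1 / (1 + y \<bullet> (matrix_inv A *v x))) *\<^sub>R outer (matrix_inv A *v x) (y v* matrix_inv A)"
      (is "_ = ?M")
proof -
  define B where "B = matrix_inv A"
  define k where "k = 1 / (1 + y \<bullet> (B *v x))"
  define M where "M = B - k *\<^sub>R outer (B *v x) (y v* B)"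
  have AB: "A *v (B *v z) = z" for z
    using matrix_inv_inverse(1)[OF assms(1)] by (simp add: B_def matrix_vector_mul_assoc)
  have "((A + outer x y) ** M) *v z = mat 1 *v z" for z
  proof -
    have Mz: "M *v z = B *v z - (k * (y \<bullet> (B *v z))) *\<^sub>R (B *v x)"
      by (simp add: M_def matrix_vector_mult_diff_rdistrib outer_mult_vector dot_lmul_matrix
          flip: scaleR_matrix_vector_assoc)
    have "(A + outer x y) *v (M *v z)
        = z + ((y \<bullet> (B *v z)) * (1 - k * (1 + y \<bullet> (B *v x)))) *\<^sub>R x"
      unfolding Mz
      by (simp add: matrix_vector_mult_add_rdistrib matrix_vector_mult_diff_distrib
          matrix_vector_mult_scaleR outer_mult_vector AB inner_diff_right algebra_simps)
    also have "\<dots> = z"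
      using assms(2) by (simp add: k_def B_def)
    finally show ?thesis
      by (simp add: matrix_vector_mul_assoc)
  qed
  then have "(A + outer x y) ** M = mat 1"
    by (simp add: matrix_eq)
  then show "invertible (A + outer x y)" and "matrix_inv (A + outer x y) = ?M"
    using invertible_right_inverse matrix_inv_unique by (auto simp: M_def k_def B_def)
qed

lemma matrix_inv_downdate_update:
  fixes A :: "real^'n^'n" and u v :: "real^'n"
  assumes "pos_def A" and "v \<bullet> (matrix_inv A *v v) < 1"
  defines "B \<equiv> matrix_inv A"
  defines "a \<equiv> v \<bullet> (B *v v)" and "b \<equiv> u \<bullet> (B *v u)" and "c \<equiv> v \<bullet> (B *v u)"
  defines "w \<equiv> B *v u + (c / (1 - a)) *\<^sub>R (B *v v)"
  shows "matrix_inv (A - outer v v + outer u u)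
    = B + (1 / (1 - a)) *\<^sub>R outer (B *v v) (B *v v) - (1 / (1 + b + c^2 / (1 - a))) *\<^sub>R outer w w"
proof -
  have inv_A: "invertible A"
    using assms(1) by (rule pos_def_invertible)
  have psd_B: "pos_semidef B"
    unfolding B_def using assms(1) by (rule pos_semidef_matrix_inv)
  then have B_row: "y v* B = B *v y" for y
    using vector_matrix_mult_symmetric unfolding pos_semidef_def by blast
  define q where "q = B *v v"
  define B' where "B' = B + (1 / (1 - a)) *\<^sub>R outer q q"
  have "1 + v \<bullet> (B *v - v) \<noteq> 0"
    using assms(2) by (simp add: B_def matrix_vector_mult_uminus)
  then have inv_A': "invertible (A - outer v v)" and inv_A'_eq: "matrix_inv (A - outer v v) = B'"
    using matrix_inv_add_outer[OF inv_A, where x = "- v" and y = v]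
    by (simp_all add: outer_uminus_left matrix_vector_mult_uminus B_row B'_def q_def a_def flip: B_def)
  have "transpose B' = B'"
    using psd_B unfolding pos_semidef_def by (simp add: B'_def transpose_add transpose_scalar transpose_outer)
  then have B'_row: "y v* B' = B' *v y" for y
    by (rule vector_matrix_mult_symmetric)
  have "q \<bullet> u = c"
    by (metis c_def q_def B_row dot_lmul_matrix)
  then have B'_u: "B' *v u = w" and u_w: "u \<bullet> w = b + c^2 / (1 - a)"
    by (simp_all add: B'_def w_def q_def outer_mult_vector matrix_vector_mult_add_rdistrib
        inner_add_right b_def c_def power2_eq_square inner_commute flip: scaleR_matrix_vector_assoc)
  have "0 \<le> b" and "0 \<le> c^2 / (1 - a)"
    using psd_B assms(2) unfolding pos_semidef_def b_def a_def B_def by auto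
  then have "1 + u \<bullet> (matrix_inv (A - outer v v) *v u) \<noteq> 0"
    unfolding inv_A'_eq B'_u u_w by linarith
  then show ?thesis
    using matrix_inv_add_outer(2)[OF inv_A', of u u]
    by (simp add: inv_A'_eq B'_row B'_u u_w) (simp add: B'_def q_def)
qed

lemma quadratic_form_scaleR:
  fixes K :: "real^'n^'n"
  shows "(c *\<^sub>R x) \<bullet> (K *v (c *\<^sub>R x)) = c^2 * (x \<bullet> (K *v x))"
  by (simp add: matrix_vector_mult_scaleR power2_eq_square)

lemma quadratic_form_lincomb:
  fixes K :: "real^'n^'n"
  assumes "transpose K = K"
  shows "(\<alpha> *\<^sub>R x + \<beta> *\<^sub>R y) \<bullet> (K *v (\<alpha> *\<^sub>R x + \<beta> *\<^sub>R y))
    = \<alpha>^2 * (x \<bullet> (K *v x)) + 2 * \<alpha> * \<beta> * (x \<bullet> (K *v y)) + \<beta>^2 * (y \<bullet> (K *v y))"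
proof -
  have "y \<bullet> (K *v x) = x \<bullet> (K *v y)"
    by (metis assms dot_lmul_matrix inner_commute transpose_matrix_vector)
  then show ?thesis
    by (simp add: matrix_vector_right_distrib matrix_vector_mult_scaleR inner_add_left inner_add_right
        power2_eq_square algebra_simps)
qed

lemma pos_semidef_cauchy_schwarz:
  assumes "pos_semidef K"
  shows "(x \<bullet> (K *v y))^2 \<le> (x \<bullet> (K *v x)) * (y \<bullet> (K *v y))"
proof -
  define a b c where "a = x \<bullet> (K *v x)" and "b = y \<bullet> (K *v y)" and "c = x \<bullet> (K *v y)"
  have comb: "0 \<le> \<alpha>^2 * a + 2 * \<alpha> * \<beta> * c + \<beta>^2 * b" for \<alpha> \<beta>
    using assms quadratic_form_lincomb[of K \<alpha> x \<beta> y] unfolding pos_semidef_def a_def b_def c_def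
    by metis
  have "a \<ge> 0" "b \<ge> 0"
    using assms unfolding pos_semidef_def a_def b_def by auto
  then consider "0 < a" | "0 < b" | "a = 0" "b = 0"
    by linarith
  then have "c^2 \<le> a * b"
  proof cases
    case 1
    have "0 \<le> a * (a * b - c^2)"
      using comb[of "-c" a] by (simp add: power2_eq_square algebra_simps)
    with 1 show ?thesis
      by (simp add: zero_le_mult_iff)
  next
    case 2
    have "0 \<le> b * (a * b - c^2)"
      using comb[of b "-c"] by (simp add: power2_eq_square algebra_simps)
    with 2 show ?thesis
      by (simp add: zero_le_mult_iff)
  next
    case 3
    then show ?thesis
      using comb[of 1 "-c"] by (simp add: power2_eq_square)
  qed
  then show ?thesis
    by (simp add: a_def b_def c_def)
qed

lemma pos_semidef_quadratic_form_add_le: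
  assumes "pos_semidef K" and "0 < t" and "t < 1"
  shows "(x + y) \<bullet> (K *v (x + y)) \<le> (x \<bullet> (K *v x)) / t + (y \<bullet> (K *v y)) / (1 - t)"
proof -
  have sym: "transpose K = K" and nonneg: "0 \<le> z \<bullet> (K *v z)" for z
    using assms(1) unfolding pos_semidef_def by auto
  define a b c where "a = x \<bullet> (K *v x)" and "b = y \<bullet> (K *v y)" and "c = x \<bullet> (K *v y)"
  have "(x + y) \<bullet> (K *v (x + y)) = a + 2 * c + b"
    using quadratic_form_lincomb[OF sym, of 1 x 1 y] by (simp add: a_def b_def c_def)
  moreover have "a / t + b / (1 - t) - (a + 2 * c + b)
      = ((1 - t) *\<^sub>R x + (- t) *\<^sub>R y) \<bullet> (K *v ((1 - t) *\<^sub>R x + (- t) *\<^sub>R y)) / (t * (1 - t))"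
    unfolding quadratic_form_lincomb[OF sym] a_def[symmetric] b_def[symmetric] c_def[symmetric]
    using assms(2,3) by (simp add: field_simps power2_eq_square)
  moreover have "0 \<le> \<dots>"
    using assms(2,3) nonneg by simp
  ultimately show ?thesis
    by (simp add: a_def b_def)
qed

lemma rank_two_coefficient_le:
  fixes a b c :: real
  assumes "0 \<le> a" and "a < 1/2" and "c^2 \<le> a * b" and "c^2 < b * (1 - a)"
  shows "(c / (1 - a))^2 / (b - c^2 / (1 - a)) \<le> 1 / (1 - 2 * a) - 1 / (1 - a)"
proof -
  have pos: "0 < 1 - a" "0 < 1 - 2 * a" "0 < b * (1 - a) - c^2"
    using assms by auto
  have "b - c^2 / (1 - a) = (b * (1 - a) - c^2) / (1 - a)"
    using pos by (simp add: field_simps)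
  then have "(c / (1 - a))^2 / (b - c^2 / (1 - a)) = c^2 / ((1 - a) * (b * (1 - a) - c^2))"
    using pos by (simp add: power_divide power2_eq_square)
  moreover have "1 / (1 - 2 * a) - 1 / (1 - a) = a / ((1 - a) * (1 - 2 * a))"
    using pos by (simp add: field_simps)
  moreover have "c^2 * (1 - 2 * a) \<le> a * (b * (1 - a) - c^2)"
  proof -
    have "a * (b * (1 - a) - c^2) - c^2 * (1 - 2 * a) = (1 - a) * (a * b - c^2)"
      by (simp add: algebra_simps)
    also have "\<dots> \<ge> 0"
      using assms(3) pos by simp
    finally show ?thesis
      by simp
  qed
  ultimately show ?thesis
    using pos by (simp add: divide_le_eq le_divide_eq mult.commute)
qed

lemma rank_two_correction_le:
  fixes X :: "real^'n^'n"
  assumes "pos_semidef X" and "0 \<le> a" and "a < 1/2" and "0 \<le> b" and "c^2 \<le> a * b"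
  defines "Q \<equiv> \<lambda>z. z \<bullet> (X *v z)"
  shows "Q q / (1 - a) - Q (p + (c / (1 - a)) *\<^sub>R q) / (1 + b + c^2 / (1 - a))
    \<le> Q q / (1 - 2 * a) - Q p / (1 + 2 * b)"
proof -
  have Q_nonneg: "0 \<le> Q z" for z
    using assms(1) unfolding pos_semidef_def Q_def by auto
  have weight_q: "Q q / (1 - a) \<le> Q q / (1 - 2 * a)"
    using assms(2,3) Q_nonneg by (intro divide_left_mono) auto
  show ?thesis
  proof (cases "c = 0")
    case True
    have "Q p / (1 + 2 * b) \<le> Q p / (1 + b)"
      using assms(4) Q_nonneg by (intro divide_left_mono) auto
    with weight_q True show ?thesis
      by simp
  next
    case False
    define t s where "t = c / (1 - a)" and "s = 1 + b + c^2 / (1 - a)"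
    have "0 < a * b"
      using False assms(5) by (metis less_le_trans zero_less_power2)
    then have "0 < b"
      using assms(2) by (simp add: zero_less_mult_iff)
    then have "a * b < (1 - a) * b"
      using assms(3) by (intro mult_strict_right_mono) auto
    then have gap: "c^2 < b * (1 - a)"
      using assms(5) by (simp add: mult.commute)
    then have "c^2 / (1 - a) < b"
      using assms(3) by (simp add: divide_less_eq mult.commute)
    then have s_pos: "0 < s" and s_less: "s < 1 + 2 * b"
      using assms(3) \<open>0 < b\<close> by (auto simp: s_def intro: add_pos_nonneg)
    have "Q p \<le> Q (p + t *\<^sub>R q) / (s / (1 + 2 * b)) + Q ((- t) *\<^sub>R q) / (1 - s / (1 + 2 * b))"
      using pos_semidef_quadratic_form_add_le
          [OF assms(1), of "s / (1 + 2 * b)" "p + t *\<^sub>R q" "(- t) *\<^sub>R q"]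
        s_pos s_less unfolding Q_def by simp
    also have "\<dots> = (1 + 2 * b) * (Q (p + t *\<^sub>R q) / s + t^2 / (1 + 2 * b - s) * Q q)"
      using s_pos s_less unfolding Q_def quadratic_form_scaleR by (simp add: field_simps)
    finally have "Q p / (1 + 2 * b) \<le> Q (p + t *\<^sub>R q) / s + t^2 / (1 + 2 * b - s) * Q q"
      using \<open>0 < b\<close> by (simp add: divide_le_eq mult.commute)
    moreover have "t^2 / (1 + 2 * b - s) * Q q \<le> (1 / (1 - 2 * a) - 1 / (1 - a)) * Q q"
      using rank_two_coefficient_le[OF assms(2,3,5) gap] Q_nonneg
      by (intro mult_right_mono) (simp_all add: t_def s_def)
    ultimately show ?thesis
      by (simp add: t_def s_def algebra_simps)
  qed
qed

theorem lemma2p13: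
  fixes A X :: "real^'d^'d" and u v :: "real^'d"
  assumes "pos_def A"
    and "2 * frob (outer v v) (matrix_inv A) < 1"
    and "pos_semidef X"
  shows "frob X (matrix_inv (A - outer v v + outer u u))
    \<le> frob X (matrix_inv A)
       + frob X (matrix_inv A ** outer v v ** matrix_inv A) / (1 - 2 * frob (outer v v) (matrix_inv A))
       - frob X (matrix_inv A ** outer u u ** matrix_inv A) / (1 + 2 * frob (outer u u) (matrix_inv A))"
proof -
  define B where "B = matrix_inv A"
  define a b c where "a = v \<bullet> (B *v v)" and "b = u \<bullet> (B *v u)" and "c = v \<bullet> (B *v u)"
  define q p where "q = B *v v" and "p = B *v u"
  have psd_B: "pos_semidef B"
    unfolding B_def using assms(1) by (rule pos_semidef_matrix_inv)
  then have B_row: "y v* B = B *v y" for y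
    using vector_matrix_mult_symmetric unfolding pos_semidef_def by blast
  have frob_a: "frob (outer v v) B = a" and frob_b: "frob (outer u u) B = b"
    by (simp_all add: frob_outer_left a_def b_def)
  have "0 \<le> a" "0 \<le> b"
    using psd_B unfolding pos_semidef_def a_def b_def by auto
  have "a < 1/2"
    using assms(2) by (simp add: frob_a flip: B_def)
  have "c^2 \<le> a * b"
    using pos_semidef_cauchy_schwarz[OF psd_B] by (simp add: a_def b_def c_def)
  have "frob X (matrix_inv (A - outer v v + outer u u))
      = frob X B + q \<bullet> (X *v q) / (1 - a)
        - (p + (c / (1 - a)) *\<^sub>R q) \<bullet> (X *v (p + (c / (1 - a)) *\<^sub>R q)) / (1 + b + c^2 / (1 - a))"
    using matrix_inv_downdate_update[OF assms(1), of v u] \<open>a < 1/2\<close>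
    unfolding B_def a_def b_def c_def q_def p_def
    by (simp add: frob_add_right frob_diff_right frob_scaleR_right frob_outer_right)
  moreover have "frob X (B ** outer v v ** B) = q \<bullet> (X *v q)"
    and "frob X (B ** outer u u ** B) = p \<bullet> (X *v p)"
    by (simp_all add: matrix_mul_outer outer_matrix_mul B_row frob_outer_right q_def p_def)
  ultimately show ?thesis
    using rank_two_correction_le
        [OF assms(3) \<open>0 \<le> a\<close> \<open>a < 1/2\<close> \<open>0 \<le> b\<close> \<open>c^2 \<le> a * b\<close>, of q p]
    by (simp add: frob_a frob_b flip: B_def)
qed

end
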